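(* Fix $k\in\mathbb{N}$, let $m=\bigl[\frac{k+1}2\bigr]$, write $\bar c_k(a):=c_k^{\mathrm{EH}}(E(a,1))/(m\pi)$ for $a\in(0,1]$, and for $l=1,\dots,m$ let $[a_l,b_l]$ denote the interval of those $a$ on which $\bar c_k(a)=\frac lm$. For a normalized generalized symplectic capacity $c$ on $\mathit{Ell}^4$ write $c(a):=c(E(a,1))$. Then: (a) $\bar c_k(a)\le c(a)$ for all $a\in(0,1]$, for every such $c$ satisfying $\bar c_k(a_l)\le c(a_l)$ for all $l=1,\dots,\bigl[\frac{k+1}2\bigr]$; (b) $\bar c_k(a)\ge c(a)$ for all $a\in(0,1]$, for every such $c$ satisfying $\bar c_k(b_l)\ge c(b_l)$ for all $l=1,\dots,\bigl[\frac k2\bigr]$ and $\lim_{a\to0}\frac{c(a)}{a}\le\frac{k}{[\frac{k+1}2]}$.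
   Context: $E(a_1,a_2)=\{z\in\mathbb{C}^2:|z_1|^2/a_1+|z_2|^2/a_2<1\}$, $0<a_1\le a_2\le\infty$. $\mathit{Ell}^4$ is the category of ellipsoids in $(\mathbb{R}^4,\omega_0)$ with morphisms the symplectic embeddings induced by global symplectomorphisms of $\mathbb{R}^4$, where $(U,\alpha^2\omega_0)$ is identified with $\alpha U$. A generalized symplectic capacity is a map $c:\mathit{Ell}^4\to[0,\infty]$ with $c(U)\le c(V)$ whenever there is a morphism $U\to V$ and $c(\alpha U)=\alpha^2c(U)$ for $\alpha>0$; it is normalized if $c(E(1,1))=1$. Ekeland–Hofer capacities on ellipsoids: writing the numbers $j a_i\pi$ ($j\in\mathbb{N}$, $i=1,2$) in increasing order with repetitions as $d_1\le d_2\le\dots$, $c_k^{\mathrm{EH}}(E(a_1,a_2))=d_k$. $[x]$ is the largest integer $\le x$. *)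

theory Defs
  imports "HOL-Analysis.Analysis"
begin

type_synonym C2 = "complex \<times> complex"

text \<open>Standard symplectic form on C^2 = R^4: omega0 = dx1 wedge dy1 + dx2 wedge dy2.\<close>
definition omega0 :: "C2 \<Rightarrow> C2 \<Rightarrow> real" where
  "omega0 u v = Im (cnj (fst u) * fst v) + Im (cnj (snd u) * snd v)"

fun iter_dderiv :: "'a::real_normed_vector list \<Rightarrow> ('a \<Rightarrow> 'b::real_normed_vector) \<Rightarrow> 'a \<Rightarrow> 'b" where
  "iter_dderiv [] f = f"
| "iter_dderiv (v # vs) f = (\<lambda>x. frechet_derivative (iter_dderiv vs f) (at x) v)"

definition smooth_map :: "('a::real_normed_vector \<Rightarrow> 'b::real_normed_vector) \<Rightarrow> bool" where
  "smooth_map f \<longleftrightarrow> (\<forall>vs x. iter_dderiv vs f differentiable (at x))"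

definition symplectomorphism :: "(C2 \<Rightarrow> C2) \<Rightarrow> bool" where
  "symplectomorphism \<phi> \<longleftrightarrow> bij \<phi> \<and> smooth_map \<phi> \<and> smooth_map (inv \<phi>) \<and>
     (\<forall>x u v. omega0 (frechet_derivative \<phi> (at x) u) (frechet_derivative \<phi> (at x) v) = omega0 u v)"

definition ellipsoid :: "real \<Rightarrow> ereal \<Rightarrow> C2 set" where
  "ellipsoid a1 a2 = {z. (cmod (fst z))\<^sup>2 / a1
      + (if a2 = \<infinity> then 0 else (cmod (snd z))\<^sup>2 / real_of_ereal a2) < 1}"

definition Ell4 :: "C2 set set" where
  "Ell4 = {ellipsoid a1 a2 | a1 a2. 0 < a1 \<and> ereal a1 \<le> a2}"

definition ell_morphism :: "C2 set \<Rightarrow> C2 set \<Rightarrow> bool" where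
  "ell_morphism U V \<longleftrightarrow> U \<in> Ell4 \<and> V \<in> Ell4 \<and> (\<exists>\<phi>. symplectomorphism \<phi> \<and> \<phi> ` U \<subseteq> V)"

text \<open>Generalized symplectic capacity on Ell4 (values on non-ellipsoids are irrelevant).\<close>
definition gen_capacity :: "(C2 set \<Rightarrow> ennreal) \<Rightarrow> bool" where
  "gen_capacity c \<longleftrightarrow>
     (\<forall>U V. ell_morphism U V \<longrightarrow> c U \<le> c V) \<and>
     (\<forall>U\<in>Ell4. \<forall>\<alpha>::real. \<alpha> > 0 \<longrightarrow> c ((\<lambda>z. \<alpha> *\<^sub>R z) ` U) = ennreal (\<alpha>\<^sup>2) * c U)"

definition normalized_capacity :: "(C2 set \<Rightarrow> ennreal) \<Rightarrow> bool" where
  "normalized_capacity c \<longleftrightarrow> gen_capacity c \<and> c (ellipsoid 1 1) = 1"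

definition EH_count :: "real \<Rightarrow> ereal \<Rightarrow> real \<Rightarrow> nat" where
  "EH_count a1 a2 t = card {(i::nat, j::nat). i \<in> {1,2} \<and> 1 \<le> j \<and>
      ereal (real j * pi) * (if i = 1 then ereal a1 else a2) \<le> ereal t}"

text \<open>k-th term d_k of the increasing sequence (with repetitions).\<close>
definition EH_capacity :: "nat \<Rightarrow> real \<Rightarrow> ereal \<Rightarrow> real" where
  "EH_capacity k a1 a2 = Inf {t. k \<le> EH_count a1 a2 t}"

definition cbar :: "nat \<Rightarrow> real \<Rightarrow> real" where
  "cbar k a = EH_capacity k a 1 / (real ((k + 1) div 2) * pi)"

definition level_set :: "nat \<Rightarrow> nat \<Rightarrow> real set" where
  "level_set k l = {a \<in> {0<..1}. cbar k a = real l / real ((k + 1) div 2)}"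

definition a_end :: "nat \<Rightarrow> nat \<Rightarrow> real" where "a_end k l = Inf (level_set k l)"
definition b_end :: "nat \<Rightarrow> nat \<Rightarrow> real" where "b_end k l = Sup (level_set k l)"

end

theory Submission
  imports Defs
begin

text \<open>Choosing the n smallest multiples of \<pi> and the k - n smallest multiples of a\<pi> shows
  c_k^EH(E(a,1)) = \<pi> min_{n \<le> k} max(n, (k - n) a). Hence cbar_k equals l/m on the plateau
  [a_l, b_l] = [l/(k-l+1), l/(k-l)] and (k-l+1) a/m on [b_{l-1}, a_l], a line through the
  origin. For a generalized capacity, c(a) is nondecreasing by inclusion, while
  c(a)/a = c(E(1,1/a)) is nonincreasing by conformality and inclusion. So a lower bound at a_l
  propagates rightwards along the plateau and leftwards along the line through the origin,
  which is exactly cbar_k; dually an upper bound at b_l propagates leftwards along the plateau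
  and rightwards along the next line, and the limit of c(a)/a controls the first piece k a/m.\<close>

section \<open>Generalized capacities of the ellipsoids E(a,1)\<close>

lemma iter_dderiv_id_cases:
  "iter_dderiv vs (id :: 'a::real_normed_vector \<Rightarrow> 'a) = id \<or>
   (\<exists>c. iter_dderiv vs (id :: 'a \<Rightarrow> 'a) = (\<lambda>_. c))"
proof (induction vs)
  case Nil
  then show ?case by simp
next
  case (Cons v vs)
  then show ?case
    by auto
qed

lemma smooth_map_id: "smooth_map (id :: 'a::real_normed_vector \<Rightarrow> 'a)"
  unfolding smooth_map_def
proof (intro allI)
  fix vs and x :: 'a
  show "iter_dderiv vs id differentiable at x"
    using iter_dderiv_id_cases[of vs] by (auto simp: id_def)
qed

lemma symplectomorphism_id: "symplectomorphism id"
  unfolding symplectomorphism_def using smooth_map_id by simp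

lemma ellipsoid_in_Ell4: "0 < a1 \<Longrightarrow> ereal a1 \<le> a2 \<Longrightarrow> ellipsoid a1 a2 \<in> Ell4"
  unfolding Ell4_def by blast

lemma ellipsoid_mono:
  assumes "0 < a1" "a1 \<le> b1" "0 < a2" "a2 \<le> b2"
  shows "ellipsoid a1 (ereal a2) \<subseteq> ellipsoid b1 (ereal b2)"
proof
  fix z
  assume "z \<in> ellipsoid a1 (ereal a2)"
  moreover have "(cmod (fst z))\<^sup>2 / b1 \<le> (cmod (fst z))\<^sup>2 / a1"
    and "(cmod (snd z))\<^sup>2 / b2 \<le> (cmod (snd z))\<^sup>2 / a2"
    using assms by (simp_all add: frac_le)
  ultimately show "z \<in> ellipsoid b1 (ereal b2)"
    unfolding ellipsoid_def by simp
qed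

lemma scaleR_image_ellipsoid:
  assumes "0 < r" "0 < a1" "0 < a2"
  shows "(\<lambda>z. r *\<^sub>R z) ` ellipsoid a1 (ereal a2) = ellipsoid (r\<^sup>2 * a1) (ereal (r\<^sup>2 * a2))"
proof -
  have mem: "r *\<^sub>R z \<in> ellipsoid (r\<^sup>2 * a1) (ereal (r\<^sup>2 * a2)) \<longleftrightarrow> z \<in> ellipsoid a1 (ereal a2)"
    for z :: C2
    using assms by (simp add: ellipsoid_def power_mult_distrib)
  show ?thesis
  proof (intro set_eqI iffI)
    fix y
    assume "y \<in> ellipsoid (r\<^sup>2 * a1) (ereal (r\<^sup>2 * a2))"
    moreover have "y = r *\<^sub>R ((1 / r) *\<^sub>R y)"
      using assms by simp
    ultimately show "y \<in> (\<lambda>z. r *\<^sub>R z) ` ellipsoid a1 (ereal a2)"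
      using mem by (metis image_eqI)
  qed (use mem in auto)
qed

lemma ellipsoid_eq_scaleR_image:
  assumes "0 < a"
  shows "ellipsoid a 1 = (\<lambda>z. sqrt a *\<^sub>R z) ` ellipsoid 1 (ereal (1 / a))"
  using scaleR_image_ellipsoid[of "sqrt a" 1 "1 / a"] assms by (simp add: one_ereal_def)

lemma gen_capacity_mono:
  assumes "gen_capacity c" "U \<in> Ell4" "V \<in> Ell4" "U \<subseteq> V"
  shows "c U \<le> c V"
proof -
  have "ell_morphism U V"
    unfolding ell_morphism_def using assms(2-4) symplectomorphism_id by (intro conjI exI[of _ id]) auto
  then show ?thesis
    using assms(1) unfolding gen_capacity_def by blast
qed

lemma gen_capacity_ellipsoid_mono:
  assumes "gen_capacity c" "0 < a" "a \<le> b" "b \<le> 1"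
  shows "c (ellipsoid a 1) \<le> c (ellipsoid b 1)"
  using gen_capacity_mono[OF assms(1)] ellipsoid_mono[of a b 1 1] ellipsoid_in_Ell4 assms
  by (simp add: one_ereal_def)

lemma gen_capacity_ellipsoid_scale:
  assumes "gen_capacity c" "0 < a" "a \<le> 1"
  shows "c (ellipsoid a 1) = ennreal a * c (ellipsoid 1 (ereal (1 / a)))"
proof -
  have "ellipsoid 1 (ereal (1 / a)) \<in> Ell4"
    using assms by (intro ellipsoid_in_Ell4) auto
  then show ?thesis
    using assms ellipsoid_eq_scaleR_image[of a] unfolding gen_capacity_def by simp
qed

lemma gen_capacity_long_ellipsoid_antimono:
  assumes "gen_capacity c" "0 < a" "a \<le> b" "b \<le> 1"
  shows "c (ellipsoid 1 (ereal (1 / b))) \<le> c (ellipsoid 1 (ereal (1 / a)))"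
  using gen_capacity_mono[OF assms(1)] ellipsoid_mono[of 1 1 "1 / b" "1 / a"] ellipsoid_in_Ell4 assms
  by (simp add: frac_le)

lemma gen_capacity_ellipsoid_ratio_antimono:
  assumes c: "gen_capacity c" and ab: "0 < a" "a \<le> b" "b \<le> 1"
  shows "ennreal a * c (ellipsoid b 1) \<le> ennreal b * c (ellipsoid a 1)"
proof -
  let ?h = "\<lambda>x. c (ellipsoid 1 (ereal (1 / x)))"
  have "ennreal a * c (ellipsoid b 1) = ennreal a * ennreal b * ?h b"
    using gen_capacity_ellipsoid_scale[OF c, of b] ab by (simp add: mult.assoc)
  also have "\<dots> \<le> ennreal a * ennreal b * ?h a"
    using gen_capacity_long_ellipsoid_antimono[OF c ab] by (rule mult_left_mono) simp
  also have "\<dots> = ennreal b * c (ellipsoid a 1)"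
    using gen_capacity_ellipsoid_scale[OF c, of a] ab by (simp add: ac_simps)
  finally show ?thesis .
qed

lemma gen_capacity_lower_bound_shrink:
  assumes c: "gen_capacity c" and ab: "0 < a" "a \<le> b" "b \<le> 1"
    and lower: "ennreal r \<le> c (ellipsoid b 1)"
  shows "ennreal (a / b * r) \<le> c (ellipsoid a 1)"
proof (cases "0 \<le> r")
  case True
  have "ennreal b * ennreal (a / b * r) = ennreal a * ennreal r"
    using ab True by (simp add: ennreal_mult[symmetric])
  also have "\<dots> \<le> ennreal a * c (ellipsoid b 1)"
    using lower by (rule mult_left_mono) simp
  also have "\<dots> \<le> ennreal b * c (ellipsoid a 1)"
    using gen_capacity_ellipsoid_ratio_antimono[OF c ab] .
  finally show ?thesis
    using ab by (simp add: ennreal_mult_le_mult_iff)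
next
  case False
  then have "a / b * r \<le> 0"
    using ab by (intro mult_nonneg_nonpos) auto
  then show ?thesis
    by (simp add: ennreal_neg)
qed

lemma gen_capacity_upper_bound_stretch:
  assumes c: "gen_capacity c" and ab: "0 < a" "a \<le> b" "b \<le> 1"
    and upper: "c (ellipsoid a 1) \<le> ennreal r"
  shows "c (ellipsoid b 1) \<le> ennreal (b / a * r)"
proof -
  have "ennreal a * c (ellipsoid b 1) \<le> ennreal b * c (ellipsoid a 1)"
    using gen_capacity_ellipsoid_ratio_antimono[OF c ab] .
  also have "\<dots> \<le> ennreal b * ennreal r"
    using upper by (rule mult_left_mono) simp
  also have "\<dots> = ennreal a * ennreal (b / a * r)"
  proof (cases "0 \<le> r")
    case False
    then have "r \<le> 0"
      by simp
    moreover have "b / a * r \<le> 0"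
      using ab \<open>r \<le> 0\<close> by (intro mult_nonneg_nonpos) auto
    ultimately show ?thesis
      by (simp add: ennreal_neg)
  qed (use ab in \<open>simp add: ennreal_mult[symmetric]\<close>)
  finally show ?thesis
    using ab by (simp add: ennreal_mult_le_mult_iff)
qed

lemma gen_capacity_le_ratio_limit:
  assumes c: "gen_capacity c" and a: "0 < a" "a \<le> 1"
    and lim: "((\<lambda>x. c (ellipsoid x 1) / ennreal x) \<longlongrightarrow> L) (at_right 0)"
  shows "c (ellipsoid a 1) \<le> ennreal a * L"
proof -
  let ?h = "\<lambda>x. c (ellipsoid 1 (ereal (1 / x)))"
  have ratio: "c (ellipsoid x 1) / ennreal x = ?h x" if "0 < x" "x \<le> 1" for x
  proof -
    have "c (ellipsoid x 1) / ennreal x = ?h x * ennreal x / ennreal x"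
      using gen_capacity_ellipsoid_scale[OF c that] by (simp add: mult.commute)
    also have "\<dots> = ?h x"
      using that by (intro ennreal_mult_divide_eq) auto
    finally show ?thesis .
  qed
  have "?h a \<le> L"
  proof (rule tendsto_le[OF trivial_limit_at_right_real lim tendsto_const])
    have "?h a \<le> c (ellipsoid x 1) / ennreal x" if "0 < x" "x < a" for x
      using gen_capacity_long_ellipsoid_antimono[OF c, of x a] ratio[of x] that a by simp
    then show "\<forall>\<^sub>F x in at_right 0. ?h a \<le> c (ellipsoid x 1) / ennreal x"
      unfolding eventually_at_right_field using a by blast
  qed
  then show ?thesis
    using gen_capacity_ellipsoid_scale[OF c a] by (simp add: mult_left_mono)
qed

section \<open>The Ekeland-Hofer capacities of E(a,1)\<close>

lemma le_nat_floor_iff: "n \<le> nat \<lfloor>y\<rfloor> \<longleftrightarrow> n = 0 \<or> real n \<le> y"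
proof (cases "n = 0")
  case False
  then have "n \<le> nat \<lfloor>y\<rfloor> \<longleftrightarrow> int n \<le> \<lfloor>y\<rfloor>"
    by linarith
  then show ?thesis
    using False by (simp add: le_floor_iff)
qed simp

lemma multiples_le_eq:
  assumes "0 < x"
  shows "{j::nat. 1 \<le> j \<and> real j * x \<le> t} = {1..nat \<lfloor>t / x\<rfloor>}"
  using assms by (auto simp: le_nat_floor_iff pos_le_divide_eq)

lemma EH_count_ellipsoid:
  assumes "0 < a"
  shows "EH_count a 1 t = nat \<lfloor>t / (pi * a)\<rfloor> + nat \<lfloor>t / pi\<rfloor>"
proof -
  have "{(i::nat, j::nat). i \<in> {1, 2} \<and> 1 \<le> j \<and>
        ereal (real j * pi) * (if i = 1 then ereal a else 1) \<le> ereal t}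
      = {1} \<times> {j. 1 \<le> j \<and> real j * (pi * a) \<le> t} \<union> {2} \<times> {j. 1 \<le> j \<and> real j * pi \<le> t}"
    (is "?counted = _")
    by (auto simp: mult.assoc)
  also have "\<dots> = {1} \<times> {1..nat \<lfloor>t / (pi * a)\<rfloor>} \<union> {2} \<times> {1..nat \<lfloor>t / pi\<rfloor>}"
    using assms multiples_le_eq[of "pi * a" t] multiples_le_eq[of pi t] by simp
  finally have count_set:
    "?counted = {1} \<times> {1..nat \<lfloor>t / (pi * a)\<rfloor>} \<union> {2} \<times> {1..nat \<lfloor>t / pi\<rfloor>}" .
  show ?thesis
    unfolding EH_count_def count_set
    by (subst card_Un_disjoint) (auto simp: card_cartesian_product_singleton)
qed

definition eh_minmax :: "nat \<Rightarrow> real \<Rightarrow> real" where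
  "eh_minmax k a = Min ((\<lambda>n. max (real n) (real (k - n) * a)) ` {..k})"

lemma eh_minmax_le_iff:
  "eh_minmax k a \<le> t \<longleftrightarrow> (\<exists>n\<le>k. real n \<le> t \<and> real (k - n) * a \<le> t)"
  unfolding eh_minmax_def by (subst Min_le_iff) auto

lemma le_eh_minmax_iff:
  "t \<le> eh_minmax k a \<longleftrightarrow> (\<forall>n\<le>k. t \<le> real n \<or> t \<le> real (k - n) * a)"
  unfolding eh_minmax_def by (subst Min_ge_iff) (auto simp: le_max_iff_disj)

lemma eh_minmax_attained:
  "\<exists>n\<le>k. eh_minmax k a = max (real n) (real (k - n) * a)"
proof -
  have "eh_minmax k a \<in> (\<lambda>n. max (real n) (real (k - n) * a)) ` {..k}"
    unfolding eh_minmax_def by (rule Min_in) auto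
  then show ?thesis
    by auto
qed

lemma le_EH_count_iff:
  assumes "0 < a" "1 \<le> k"
  shows "k \<le> EH_count a 1 t \<longleftrightarrow> pi * eh_minmax k a \<le> t"
proof (cases "0 \<le> t")
  case True
  have floor_iff: "n \<le> nat \<lfloor>t / x\<rfloor> \<longleftrightarrow> real n * x \<le> t" if "0 < x" for n x
    using True that by (auto simp: le_nat_floor_iff pos_le_divide_eq)
  have "k \<le> nat \<lfloor>t / (pi * a)\<rfloor> + nat \<lfloor>t / pi\<rfloor> \<longleftrightarrow>
      (\<exists>n\<le>k. n \<le> nat \<lfloor>t / pi\<rfloor> \<and> k - n \<le> nat \<lfloor>t / (pi * a)\<rfloor>)"
  proof
    assume "k \<le> nat \<lfloor>t / (pi * a)\<rfloor> + nat \<lfloor>t / pi\<rfloor>"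
    then show "\<exists>n\<le>k. n \<le> nat \<lfloor>t / pi\<rfloor> \<and> k - n \<le> nat \<lfloor>t / (pi * a)\<rfloor>"
      by (intro exI[of _ "min k (nat \<lfloor>t / pi\<rfloor>)"]) auto
  qed auto
  also have "\<dots> \<longleftrightarrow> (\<exists>n\<le>k. real n \<le> t / pi \<and> real (k - n) * a \<le> t / pi)"
    using assms by (simp add: floor_iff pos_le_divide_eq ac_simps)
  also have "\<dots> \<longleftrightarrow> eh_minmax k a \<le> t / pi"
    by (rule eh_minmax_le_iff[symmetric])
  also have "\<dots> \<longleftrightarrow> pi * eh_minmax k a \<le> t"
    by (simp add: pos_le_divide_eq mult.commute)
  finally show ?thesis
    using assms by (simp add: EH_count_ellipsoid)
next
  case False
  have "t / (pi * a) \<le> 0" "t / pi \<le> 0"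
    using False assms by (simp_all add: divide_nonpos_pos)
  moreover have "0 \<le> pi * eh_minmax k a"
    using assms by (simp add: le_eh_minmax_iff)
  ultimately show ?thesis
    using False assms by (simp add: EH_count_ellipsoid nat_floor_neg)
qed

lemma EH_capacity_ellipsoid:
  assumes "0 < a" "1 \<le> k"
  shows "EH_capacity k a 1 = pi * eh_minmax k a"
proof -
  have "{t. k \<le> EH_count a 1 t} = {pi * eh_minmax k a..}"
    using le_EH_count_iff[OF assms] by auto
  then show ?thesis
    unfolding EH_capacity_def by simp
qed

lemma cbar_eq_eh_minmax:
  assumes "0 < a" "1 \<le> k"
  shows "cbar k a = eh_minmax k a / real ((k + 1) div 2)"
  unfolding cbar_def using EH_capacity_ellipsoid[OF assms] by simp

lemma le_eh_minmax_iff_nat: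
  assumes "1 \<le> l" "l \<le> k + 1" "0 \<le> a"
  shows "real l \<le> eh_minmax k a \<longleftrightarrow> real l \<le> real (k + 1 - l) * a"
proof
  assume "real l \<le> eh_minmax k a"
  then have "\<forall>n\<le>k. real l \<le> real n \<or> real l \<le> real (k - n) * a"
    by (simp only: le_eh_minmax_iff)
  then have "real l \<le> real (l - 1) \<or> real l \<le> real (k - (l - 1)) * a"
    using assms(2) by simp
  then show "real l \<le> real (k + 1 - l) * a"
    using assms by (simp add: of_nat_diff)
next
  assume l: "real l \<le> real (k + 1 - l) * a"
  have "real l \<le> real (k - n) * a" if "n < l" "n \<le> k" for n
  proof -
    have "real (k + 1 - l) \<le> real (k - n)"
      using that by simp
    then show ?thesis
      using l assms(3) by (meson mult_right_mono order_trans)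
  qed
  then show "real l \<le> eh_minmax k a"
    unfolding le_eh_minmax_iff by (meson not_le of_nat_le_iff)
qed

lemma eh_minmax_le_nat_iff:
  assumes "l \<le> k" "0 \<le> a"
  shows "eh_minmax k a \<le> real l \<longleftrightarrow> real (k - l) * a \<le> real l"
proof
  assume "eh_minmax k a \<le> real l"
  then obtain n where n: "n \<le> k" "real n \<le> real l" "real (k - n) * a \<le> real l"
    unfolding eh_minmax_le_iff by blast
  have "real (k - l) \<le> real (k - n)"
    using n by simp
  then show "real (k - l) * a \<le> real l"
    using n assms(2) by (meson mult_right_mono order_trans)
next
  assume "real (k - l) * a \<le> real l"
  then show "eh_minmax k a \<le> real l"
    using assms unfolding eh_minmax_le_iff by auto
qed

lemma level_set_eq:
  assumes "1 \<le> l" "l \<le> k"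
  shows "level_set k l =
    {a. 0 < a \<and> a \<le> 1 \<and> real l \<le> real (k + 1 - l) * a \<and> real (k - l) * a \<le> real l}"
proof -
  have m: "real ((k + 1) div 2) > 0"
    using assms by simp
  have "a \<in> level_set k l \<longleftrightarrow> 0 < a \<and> a \<le> 1 \<and> eh_minmax k a = real l" for a
    unfolding level_set_def using cbar_eq_eh_minmax[of a k] m assms by auto
  moreover have "eh_minmax k a = real l \<longleftrightarrow>
      real l \<le> real (k + 1 - l) * a \<and> real (k - l) * a \<le> real l" if "0 < a" for a
    using le_eh_minmax_iff_nat[of l k a] eh_minmax_le_nat_iff[of l k a] assms that
    by (simp only: order_eq_iff[of "eh_minmax k a"]) auto
  ultimately show ?thesis
    by auto
qed

lemma a_end_eq:
  assumes "1 \<le> l" "l \<le> (k + 1) div 2"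
  shows "a_end k l = real l / real (k + 1 - l)" and "a_end k l \<in> level_set k l"
proof -
  have lk: "l \<le> k" "2 * l \<le> k + 1"
    using assms by linarith+
  define x where "x = real l / real (k + 1 - l)"
  have x: "0 < x" "x \<le> 1" "real (k + 1 - l) * x = real l"
    using assms lk by (auto simp: x_def of_nat_diff)
  have "real (k - l) * x \<le> real (k + 1 - l) * x"
    using x(1) lk by (intro mult_right_mono) auto
  then have "real l \<le> real (k + 1 - l) * x" "real (k - l) * x \<le> real l"
    using x(3) by linarith+
  then have "x \<in> level_set k l"
    unfolding level_set_eq[OF assms(1) lk(1)] using x(1,2) by blast
  moreover have "x \<le> y" if "y \<in> level_set k l" for y
    using that assms lk unfolding level_set_eq[OF assms(1) lk(1)] x_def
    by (simp add: pos_divide_le_eq mult.commute)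
  ultimately show "a_end k l = x" "a_end k l \<in> level_set k l"
    unfolding a_end_def using cInf_eq_minimum by auto
qed

lemma b_end_eq:
  assumes "1 \<le> l" "l \<le> k div 2"
  shows "b_end k l = real l / real (k - l)" and "b_end k l \<in> level_set k l"
proof -
  have lk: "l \<le> k" "2 * l \<le> k"
    using assms by linarith+
  define x where "x = real l / real (k - l)"
  have x: "0 < x" "x \<le> 1" "real (k - l) * x = real l"
    using assms lk by (auto simp: x_def of_nat_diff)
  have "real (k - l) * x \<le> real (k + 1 - l) * x"
    using x(1) lk by (intro mult_right_mono) auto
  then have "real l \<le> real (k + 1 - l) * x" "real (k - l) * x \<le> real l"
    using x(3) by linarith+
  then have "x \<in> level_set k l"
    unfolding level_set_eq[OF assms(1) lk(1)] using x(1,2) by blast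
  moreover have "y \<le> x" if "y \<in> level_set k l" for y
    using that assms lk unfolding level_set_eq[OF assms(1) lk(1)] x_def
    by (simp add: pos_le_divide_eq mult.commute)
  ultimately show "b_end k l = x" "b_end k l \<in> level_set k l"
    unfolding b_end_def using cSup_eq_maximum by auto
qed

section \<open>Comparison with cbar\<close>

lemma exists_level_above:
  assumes "1 \<le> k" "0 < a" "a \<le> 1"
  obtains l where "1 \<le> l" "l \<le> (k + 1) div 2"
    "eh_minmax k a \<le> real l" "eh_minmax k a \<le> real (k + 1 - l) * a"
proof -
  define m where "m = (k + 1) div 2"
  define l where "l = nat \<lceil>eh_minmax k a\<rceil>"
  have "\<not> eh_minmax k a \<le> 0"
    using eh_minmax_le_nat_iff[of 0 k a] assms by (simp add: not_le)
  moreover have "eh_minmax k a \<le> real m"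
  proof -
    have "real (k - m) * a \<le> real (k - m)"
      using assms by (simp add: mult_left_le)
    also have "\<dots> \<le> real m"
      unfolding m_def by linarith
    finally show ?thesis
      using eh_minmax_le_nat_iff[of m k a] assms unfolding m_def by linarith
  qed
  ultimately have l: "1 \<le> l" "l \<le> m" "eh_minmax k a \<le> real l" "real l - 1 < eh_minmax k a"
    unfolding l_def by (auto simp: le_nat_iff ceiling_le_iff) linarith+
  have "l - 1 \<le> k"
    using l(2) unfolding m_def by linarith
  then have "eh_minmax k a \<le> real (l - 1) \<longleftrightarrow> real (k - (l - 1)) * a \<le> real (l - 1)"
    using assms(2) by (intro eh_minmax_le_nat_iff) auto
  moreover have "\<not> eh_minmax k a \<le> real (l - 1)"
    using l(1,4) by (simp add: of_nat_diff)
  ultimately have "real (l - 1) \<le> real (k - (l - 1)) * a"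
    by linarith
  moreover have "k - (l - 1) = k + 1 - l"
    using l(1) \<open>l - 1 \<le> k\<close> by simp
  ultimately have "eh_minmax k a \<le> real (k + 1 - l) * a"
    using \<open>l - 1 \<le> k\<close> unfolding eh_minmax_le_iff by (intro exI[of _ "l - 1"]) simp
  then show ?thesis
    using that l unfolding m_def by blast
qed

lemma capacity_ge_min_at_a_end:
  assumes c: "gen_capacity c" and l: "1 \<le> l" "l \<le> (k + 1) div 2"
    and at_a_end: "ennreal (cbar k (a_end k l)) \<le> c (ellipsoid (a_end k l) 1)"
    and a: "0 < a" "a \<le> 1"
  shows "ennreal (min (real l) (real (k + 1 - l) * a) / real ((k + 1) div 2)) \<le> c (ellipsoid a 1)"
proof -
  define m where "m = real ((k + 1) div 2)"
  have m: "0 < m"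
    using l unfolding m_def by simp
  define b where "b = a_end k l"
  have b: "b = real l / real (k + 1 - l)" "0 < b" "b \<le> 1" "cbar k b = real l / m"
    using a_end_eq[OF l] unfolding b_def level_set_def m_def by auto
  have lower: "ennreal (real l / m) \<le> c (ellipsoid b 1)"
    using at_a_end b(4) unfolding b_def by simp
  show ?thesis
    unfolding m_def[symmetric]
  proof (cases "b \<le> a")
    case True
    have "ennreal (min (real l) (real (k + 1 - l) * a) / m) \<le> ennreal (real l / m)"
      using m by (intro ennreal_leI divide_right_mono) auto
    also have "\<dots> \<le> c (ellipsoid b 1)"
      by (rule lower)
    also have "\<dots> \<le> c (ellipsoid a 1)"
      using gen_capacity_ellipsoid_mono[OF c b(2) True a(2)] .
    finally show "ennreal (min (real l) (real (k + 1 - l) * a) / m) \<le> c (ellipsoid a 1)" .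
  next
    case False
    have "a / b * (real l / m) = real (k + 1 - l) * a / m"
      using b(1,2) l(1) m by (simp add: field_simps)
    then have "ennreal (min (real l) (real (k + 1 - l) * a) / m) \<le> ennreal (a / b * (real l / m))"
      using m by (intro ennreal_leI) (simp add: divide_right_mono)
    also have "\<dots> \<le> c (ellipsoid a 1)"
      using gen_capacity_lower_bound_shrink[OF c a(1) _ b(3) lower] False by simp
    finally show "ennreal (min (real l) (real (k + 1 - l) * a) / m) \<le> c (ellipsoid a 1)" .
  qed
qed

lemma capacity_le_max_at_b_end:
  assumes c: "gen_capacity c" and n: "1 \<le> n" "n \<le> k div 2"
    and at_b_end: "c (ellipsoid (b_end k n) 1) \<le> ennreal (cbar k (b_end k n))"
    and a: "0 < a" "a \<le> 1"
  shows "c (ellipsoid a 1) \<le> ennreal (max (real n) (real (k - n) * a) / real ((k + 1) div 2))"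
proof -
  define m where "m = real ((k + 1) div 2)"
  have m: "0 < m"
    using n unfolding m_def by simp
  define b where "b = b_end k n"
  have b: "b = real n / real (k - n)" "0 < b" "b \<le> 1" "cbar k b = real n / m"
    using b_end_eq[OF n] unfolding b_def level_set_def m_def by auto
  have upper: "c (ellipsoid b 1) \<le> ennreal (real n / m)"
    using at_b_end b(4) unfolding b_def by simp
  show ?thesis
    unfolding m_def[symmetric]
  proof (cases "a \<le> b")
    case True
    have "c (ellipsoid a 1) \<le> c (ellipsoid b 1)"
      using gen_capacity_ellipsoid_mono[OF c a(1) True b(3)] .
    also have "\<dots> \<le> ennreal (real n / m)"
      by (rule upper)
    also have "\<dots> \<le> ennreal (max (real n) (real (k - n) * a) / m)"
      using m by (intro ennreal_leI divide_right_mono) auto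
    finally show "c (ellipsoid a 1) \<le> ennreal (max (real n) (real (k - n) * a) / m)" .
  next
    case False
    have "a / b * (real n / m) = real (k - n) * a / m"
      using b(1,2) n(1) m by (simp add: field_simps)
    then have "c (ellipsoid a 1) \<le> ennreal (real (k - n) * a / m)"
      using gen_capacity_upper_bound_stretch[OF c b(2) _ a(2) upper] False by simp
    also have "\<dots> \<le> ennreal (max (real n) (real (k - n) * a) / m)"
      using m by (intro ennreal_leI divide_right_mono) auto
    finally show "c (ellipsoid a 1) \<le> ennreal (max (real n) (real (k - n) * a) / m)" .
  qed
qed

lemma cbar_le_capacity:
  assumes k: "1 \<le> k" and c: "gen_capacity c"
    and at_a_end: "\<forall>l\<in>{1..(k + 1) div 2}. ennreal (cbar k (a_end k l)) \<le> c (ellipsoid (a_end k l) 1)"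
    and a: "0 < a" "a \<le> 1"
  shows "ennreal (cbar k a) \<le> c (ellipsoid a 1)"
proof -
  obtain l where l: "1 \<le> l" "l \<le> (k + 1) div 2"
    and below: "eh_minmax k a \<le> real l" "eh_minmax k a \<le> real (k + 1 - l) * a"
    using exists_level_above[OF k a] .
  have "cbar k a \<le> min (real l) (real (k + 1 - l) * a) / real ((k + 1) div 2)"
    unfolding cbar_eq_eh_minmax[OF a(1) k] using below by (intro divide_right_mono) auto
  then have "ennreal (cbar k a) \<le> ennreal (min (real l) (real (k + 1 - l) * a) / real ((k + 1) div 2))"
    by (rule ennreal_leI)
  also have "\<dots> \<le> c (ellipsoid a 1)"
    using capacity_ge_min_at_a_end[OF c l _ a] at_a_end l by simp
  finally show ?thesis .
qed

lemma capacity_le_cbar: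
  assumes k: "1 \<le> k" and c: "normalized_capacity c"
    and at_b_end: "\<forall>l\<in>{1..k div 2}. c (ellipsoid (b_end k l) 1) \<le> ennreal (cbar k (b_end k l))"
    and lim: "((\<lambda>x. c (ellipsoid x 1) / ennreal x) \<longlongrightarrow> L) (at_right 0)"
    and L: "L \<le> ennreal (real k / real ((k + 1) div 2))"
    and a: "0 < a" "a \<le> 1"
  shows "c (ellipsoid a 1) \<le> ennreal (cbar k a)"
proof -
  define m where "m = real ((k + 1) div 2)"
  have m: "0 < m"
    using k unfolding m_def by simp
  have gc: "gen_capacity c"
    using c unfolding normalized_capacity_def by simp
  have bound: "c (ellipsoid a 1) \<le> ennreal (max (real n) (real (k - n) * a) / m)" for n
  proof -
    consider "n = 0" | "1 \<le> n" "n \<le> k div 2" | "(k + 1) div 2 \<le> n"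
      by linarith
    then show ?thesis
    proof cases
      case 1
      have "c (ellipsoid a 1) \<le> ennreal a * L"
        using gen_capacity_le_ratio_limit[OF gc a lim] .
      also have "\<dots> \<le> ennreal a * ennreal (real k / m)"
        using L unfolding m_def by (rule mult_left_mono) simp
      also have "\<dots> = ennreal (real (k - n) * a / m)"
        using 1 a by (simp add: ennreal_mult'[symmetric] mult.commute)
      also have "\<dots> \<le> ennreal (max (real n) (real (k - n) * a) / m)"
        using m by (intro ennreal_leI divide_right_mono) auto
      finally show ?thesis .
    next
      case 2
      then show ?thesis
        using capacity_le_max_at_b_end[OF gc 2 _ a] at_b_end unfolding m_def by simp
    next
      case 3
      have "c (ellipsoid a 1) \<le> c (ellipsoid 1 1)"
        using gen_capacity_ellipsoid_mono[OF gc a(1) a(2)] by simp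
      also have "\<dots> = ennreal 1"
        using c unfolding normalized_capacity_def by simp
      also have "\<dots> \<le> ennreal (max (real n) (real (k - n) * a) / m)"
        using 3 m unfolding m_def by (intro ennreal_leI) (simp add: le_divide_eq_1)
      finally show ?thesis .
    qed
  qed
  obtain n where "eh_minmax k a = max (real n) (real (k - n) * a)"
    using eh_minmax_attained by blast
  then show ?thesis
    using bound[of n] cbar_eq_eh_minmax[OF a(1) k] unfolding m_def by simp
qed

theorem mainTheorem8:
  fixes k :: nat
  assumes "1 \<le> k"
  shows "(\<forall>c. normalized_capacity c \<and>
            (\<forall>l\<in>{1..(k + 1) div 2}. ennreal (cbar k (a_end k l)) \<le> c (ellipsoid (a_end k l) 1))
          \<longrightarrow> (\<forall>a\<in>{0<..1}. ennreal (cbar k a) \<le> c (ellipsoid a 1)))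
       \<and> (\<forall>c. normalized_capacity c \<and>
            (\<forall>l\<in>{1..k div 2}. c (ellipsoid (b_end k l) 1) \<le> ennreal (cbar k (b_end k l))) \<and>
            (\<exists>L. ((\<lambda>a. c (ellipsoid a 1) / ennreal a) \<longlongrightarrow> L) (at_right 0) \<and>
                 L \<le> ennreal (real k / real ((k + 1) div 2)))
          \<longrightarrow> (\<forall>a\<in>{0<..1}. c (ellipsoid a 1) \<le> ennreal (cbar k a)))"
proof (intro conjI allI impI ballI)
  fix c and a :: real
  assume "normalized_capacity c \<and>
    (\<forall>l\<in>{1..(k + 1) div 2}. ennreal (cbar k (a_end k l)) \<le> c (ellipsoid (a_end k l) 1))"
    and "a \<in> {0<..1}"
  then show "ennreal (cbar k a) \<le> c (ellipsoid a 1)"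
    using cbar_le_capacity[OF assms] unfolding normalized_capacity_def by auto
next
  fix c and a :: real
  assume "normalized_capacity c \<and>
    (\<forall>l\<in>{1..k div 2}. c (ellipsoid (b_end k l) 1) \<le> ennreal (cbar k (b_end k l))) \<and>
    (\<exists>L. ((\<lambda>a. c (ellipsoid a 1) / ennreal a) \<longlongrightarrow> L) (at_right 0) \<and>
         L \<le> ennreal (real k / real ((k + 1) div 2)))"
    and "a \<in> {0<..1}"
  then show "c (ellipsoid a 1) \<le> ennreal (cbar k a)"
    using capacity_le_cbar[OF assms] by auto
qed

end
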